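(* Let $\mathbb{H}$ be a finite dimensional real Hilbert space, $\epsilon\in[0,1)$, and $T\in\mathbb{B}(\mathbb{H})$. Then for any $A\in\mathbb{B}(\mathbb{H})$, $T\perp_B^{\epsilon}A$ if and only if $|\langle Tx,Ax\rangle|\le\epsilon\|T\|\|A\|$ for some $x\in M_T$. Moreover, if $M_T\subseteq M_A$, then $T\perp_B^{\epsilon}A$ if and only if $Tx\perp^{\epsilon}Ax$ for some $x\in M_T$.
   Context: $M_T=\{x\in\mathbb{H}:\|x\|=1,\ \|Tx\|=\|T\|\}$. For $\epsilon\in[0,1)$ and $u,v$ in a normed space, $u\perp_B^{\epsilon}v$ means $\|u+\lambda v\|^2\ge\|u\|^2-2\epsilon\|u\|\|\lambda v\|$ for all $\lambda\in\mathbb{R}$ (operators are taken with the operator norm). In an inner product space, $x\perp^{\epsilon}y$ means $|\langle x,y\rangle|\le\epsilon\|x\|\|y\|$. *)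

theory Defs
  imports "HOL-Analysis.Analysis"
begin

definition bj_eps_orth :: "real \<Rightarrow> 'a::real_normed_vector \<Rightarrow> 'a \<Rightarrow> bool" where
  "bj_eps_orth eps u v \<longleftrightarrow>
     (\<forall>t::real. norm (u + t *\<^sub>R v) ^ 2 \<ge> norm u ^ 2 - 2 * eps * norm u * norm (t *\<^sub>R v))"

definition inner_eps_orth :: "real \<Rightarrow> 'a::real_inner \<Rightarrow> 'a \<Rightarrow> bool" where
  "inner_eps_orth eps x y \<longleftrightarrow> \<bar>inner x y\<bar> \<le> eps * norm x * norm y"

definition norm_attain :: "('a::real_normed_vector \<Rightarrow>\<^sub>L 'b::real_normed_vector) \<Rightarrow> 'a set" where
  "norm_attain T = {x. norm x = 1 \<and> norm (blinfun_apply T x) = norm T}"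

end

theory Submission
  imports Defs
begin

text \<open>
  Write \<open>c = \<epsilon> \<parallel>T\<parallel> \<parallel>A\<parallel>\<close> and \<open>q x = \<langle>T x, A x\<rangle>\<close>. If \<open>|q x| \<le> c\<close> at some
  \<open>x \<in> M\<^sub>T\<close>, evaluating \<open>T + t A\<close> at \<open>x\<close> gives the Birkhoff-James inequality directly.
  Conversely, for \<open>t > 0\<close> a unit vector at which \<open>T + t A\<close> attains its norm almost
  attains \<open>\<parallel>T\<parallel>\<close> and has \<open>q \<ge> -c - O(t)\<close>; by compactness of the unit sphere some
  \<open>x \<in> M\<^sub>T\<close> has \<open>q x \<ge> -c\<close>, and the same argument for \<open>-A\<close> gives \<open>y \<in> M\<^sub>T\<close> with
  \<open>q y \<le> c\<close>. Since the vectors at which \<open>T\<close> attains its norm form a subspace,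
  the segment from \<open>x\<close> to \<open>y\<close> consists of such vectors, and the intermediate value
  theorem yields a point of \<open>M\<^sub>T\<close> with \<open>q = 0\<close> unless the two values already lie in
  \<open>[-c, c]\<close>. If \<open>M\<^sub>T \<subseteq> M\<^sub>A\<close>, then \<open>c = \<epsilon> \<parallel>T x\<parallel> \<parallel>A x\<parallel>\<close> on \<open>M\<^sub>T\<close>.
\<close>

lemma norm_add_scaleR_square:
  fixes u v :: "'a::real_inner"
  shows "norm (u + t *\<^sub>R v)^2 = norm u^2 + 2 * t * inner u v + t^2 * norm v^2"
  unfolding power2_norm_eq_inner
  by (simp add: inner_add_left inner_add_right inner_commute[of v u] algebra_simps power2_eq_square)

lemma bj_eps_orth_uminus:
  assumes "bj_eps_orth eps u v"
  shows "bj_eps_orth eps u (- v)"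
  unfolding bj_eps_orth_def
proof
  fix t :: real
  show "norm u ^ 2 - 2 * eps * norm u * norm (t *\<^sub>R - v) \<le> norm (u + t *\<^sub>R - v) ^ 2"
    using assms[unfolded bj_eps_orth_def, rule_format, of "- t"] by simp
qed

lemma norm_attain_nonempty:
  fixes B :: "'a::euclidean_space \<Rightarrow>\<^sub>L 'b::real_normed_vector"
  shows "norm_attain B \<noteq> {}"
proof -
  have "sphere (0::'a) 1 \<noteq> {}"
    using nonempty_Basis norm_Basis by fastforce
  moreover have "continuous_on (sphere 0 1) (\<lambda>x. norm (B x))"
    by (intro continuous_on_norm linear_continuous_on blinfun.bounded_linear_right)
  ultimately obtain x where x: "x \<in> sphere 0 1"
    and max: "\<And>y. y \<in> sphere 0 1 \<Longrightarrow> norm (B y) \<le> norm (B x)"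
    using continuous_attains_sup[of "sphere 0 1" "\<lambda>x. norm (B x)"] by auto
  have "norm B \<le> norm (B x)"
  proof (rule norm_blinfun_bound)
    fix y
    show "norm (B y) \<le> norm (B x) * norm y"
    proof (cases "y = 0")
      case False
      have "norm (B (y /\<^sub>R norm y)) \<le> norm (B x)"
        using False by (intro max) simp
      then show ?thesis
        using False by (simp add: blinfun.scaleR_right field_simps)
    qed simp
  qed simp
  moreover have "norm (B x) \<le> norm B"
    using norm_blinfun[of B x] x by simp
  ultimately have "x \<in> norm_attain B"
    using x by (simp add: norm_attain_def)
  then show ?thesis by blast
qed

text \<open>
  \<open>\<parallel>T\<parallel>\<^sup>2\<langle>u, v\<rangle> - \<langle>T u, T v\<rangle>\<close> is a positive semidefinite form vanishing on \<open>x\<close> and \<open>y\<close>,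
  so by Cauchy-Schwarz it vanishes on the span of \<open>x\<close> and \<open>y\<close>.
\<close>
lemma subspace_norm_attaining:
  fixes T :: "'a::real_inner \<Rightarrow>\<^sub>L 'b::real_inner"
  shows "subspace {x. norm (T x) = norm T * norm x}"
proof (rule subspaceI)
  define B where "B u v = (norm T)^2 * inner u v - inner (T u) (T v)" for u v
  have B_nonneg: "0 \<le> B u u" for u
  proof -
    have "norm (T u)^2 \<le> (norm T * norm u)^2"
      using norm_blinfun[of T u] by (simp add: power_mono)
    then show ?thesis
      by (simp add: B_def power2_norm_eq_inner power_mult_distrib)
  qed
  have B_zero_iff: "B u u = 0 \<longleftrightarrow> norm (T u) = norm T * norm u" for u
  proof -
    have "B u u = (norm T * norm u)^2 - norm (T u)^2"
      by (simp add: B_def power2_norm_eq_inner power_mult_distrib)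
    then show ?thesis
      using power2_eq_iff_nonneg[of "norm T * norm u" "norm (T u)"] by auto
  qed
  have B_sum: "B (u + s *\<^sub>R v) (u + s *\<^sub>R v) = B u u + 2 * s * B u v + s^2 * B v v" for u v s
    by (simp add: B_def blinfun.add_right blinfun.scaleR_right inner_add_left inner_add_right
        inner_commute[of v u] inner_commute[of "T v" "T u"] algebra_simps power2_eq_square)
  fix x y
  assume "x \<in> {x. norm (T x) = norm T * norm x}" "y \<in> {x. norm (T x) = norm T * norm x}"
  then have Bx: "B x x = 0" and By: "B y y = 0"
    by (simp_all add: B_zero_iff)
  have "0 \<le> B (x + (- B x y) *\<^sub>R y) (x + (- B x y) *\<^sub>R y)"
    by (rule B_nonneg)
  also have "\<dots> = - 2 * (B x y)^2"
    unfolding B_sum Bx By by (simp add: power2_eq_square)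
  finally have "B x y = 0"
    by simp
  then have "B (x + 1 *\<^sub>R y) (x + 1 *\<^sub>R y) = 0"
    by (simp only: B_sum Bx By)
  then show "x + y \<in> {x. norm (T x) = norm T * norm x}"
    by (simp add: B_zero_iff)
qed (simp_all add: blinfun.scaleR_right)

lemma norm_attain_inner_zero:
  fixes T A :: "'a::real_inner \<Rightarrow>\<^sub>L 'b::real_inner"
  assumes x: "x \<in> norm_attain T" and y: "y \<in> norm_attain T"
    and qx: "0 \<le> inner (T x) (A x)" and qy: "inner (T y) (A y) \<le> 0"
  shows "\<exists>w\<in>norm_attain T. inner (T w) (A w) = 0"
proof (cases "y = - x")
  case True
  then have "inner (T x) (A x) = inner (T y) (A y)"
    by (simp add: blinfun.minus_right)
  then show ?thesis
    using x qx qy by force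
next
  case False
  define z where "z s = (1 - s) *\<^sub>R x + s *\<^sub>R y" for s :: real
  have "continuous_on {0..1} (\<lambda>s. inner (T (z s)) (A (z s)))"
    unfolding z_def by (intro continuous_intros)
  then obtain s where s: "0 \<le> s" "s \<le> 1" and qs: "inner (T (z s)) (A (z s)) = 0"
    using IVT2'[of "\<lambda>s. inner (T (z s)) (A (z s))" 1 0 0] qx qy by (auto simp: z_def)
  have "z s \<noteq> 0"
  proof
    assume z0: "z s = 0"
    then have "norm ((1 - s) *\<^sub>R x) = norm (s *\<^sub>R y)"
      by (simp add: z_def add_eq_0_iff2)
    then have s_half: "s = 1/2"
      using x y s by (simp add: norm_attain_def)
    have "z (1/2) = 0"
      using z0 by (simp only: s_half)
    then have "(1/2::real) *\<^sub>R (x + y) = 0"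
      by (simp add: z_def scaleR_add_right)
    then show False
      using False by (simp add: add_eq_0_iff2 add.commute)
  qed
  have "x \<in> {v. norm (T v) = norm T * norm v}" "y \<in> {v. norm (T v) = norm T * norm v}"
    using x y by (simp_all add: norm_attain_def)
  then have "z s \<in> {v. norm (T v) = norm T * norm v}"
    unfolding z_def by (intro subspace_add subspace_scale subspace_norm_attaining)
  then have "z s /\<^sub>R norm (z s) \<in> norm_attain T"
    using \<open>z s \<noteq> 0\<close> by (simp add: norm_attain_def blinfun.scaleR_right)
  moreover have "inner (T (z s /\<^sub>R norm (z s))) (A (z s /\<^sub>R norm (z s))) = 0"
    using qs by (simp add: blinfun.scaleR_right)
  ultimately show ?thesis by blast
qed

lemma compact_exists_nonpos_if_approx:
  fixes f g :: "'a::topological_space \<Rightarrow> real"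
  assumes S: "compact S" and f: "continuous_on S f" and g: "continuous_on S g"
    and approx: "\<And>e. 0 < e \<Longrightarrow> \<exists>x\<in>S. f x \<le> e \<and> g x \<le> e"
  shows "\<exists>x\<in>S. f x \<le> 0 \<and> g x \<le> 0"
proof -
  have "S \<noteq> {}"
    using approx[of 1] by auto
  moreover have "continuous_on S (\<lambda>x. max (f x) (g x))"
    using f g by (rule continuous_on_max)
  ultimately obtain x0 where x0: "x0 \<in> S" and min: "\<And>y. y \<in> S \<Longrightarrow> max (f x0) (g x0) \<le> max (f y) (g y)"
    using continuous_attains_inf[OF S] by blast
  have "max (f x0) (g x0) \<le> 0"
  proof (rule ccontr)
    assume pos: "\<not> max (f x0) (g x0) \<le> 0"
    then have "0 < max (f x0) (g x0) / 2"
      by (simp only: not_le)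
    then obtain y where "y \<in> S" "f y \<le> max (f x0) (g x0) / 2" "g y \<le> max (f x0) (g x0) / 2"
      using approx by blast
    then show False
      using min[of y] pos by linarith
  qed
  then show ?thesis
    using x0 by auto
qed

text \<open>The vector comes from \<open>norm_attain (T + t A)\<close>; the second bound is the
  Birkhoff-James inequality at \<open>t\<close> divided by \<open>2t\<close>.\<close>
lemma bj_eps_orth_near_norm_attain:
  fixes T A :: "'a::euclidean_space \<Rightarrow>\<^sub>L 'b::real_inner"
  assumes bj: "bj_eps_orth eps T A" and t: "0 < t"
  shows "\<exists>x. norm x = 1 \<and> norm T - norm (T x) \<le> 2 * t * norm A
             \<and> - (eps * norm T * norm A) - inner (T x) (A x) \<le> t * norm A ^ 2 / 2"
proof -
  obtain x where x: "norm x = 1" and attain: "norm (T x + t *\<^sub>R A x) = norm (T + t *\<^sub>R A)"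
    using norm_attain_nonempty[of "T + t *\<^sub>R A"]
    by (auto simp: norm_attain_def blinfun.add_left blinfun.scaleR_left)
  have Ax: "norm (A x) \<le> norm A" and Tx: "norm (T x) \<le> norm T"
    using norm_blinfun[of A x] norm_blinfun[of T x] x by simp_all
  have "norm T - t * norm A \<le> norm (T + t *\<^sub>R A)"
    using norm_triangle_ineq4[of "T + t *\<^sub>R A" "t *\<^sub>R A"] t by simp
  also have "\<dots> \<le> norm (T x) + t * norm (A x)"
    using norm_triangle_ineq[of "T x" "t *\<^sub>R A x"] t attain by simp
  also have "\<dots> \<le> norm (T x) + t * norm A"
    using Ax t by (simp add: mult_left_mono)
  finally have near: "norm T - norm (T x) \<le> 2 * t * norm A"
    by simp
  have "norm T ^ 2 - 2 * (eps * norm T * norm A) * t \<le> norm (T + t *\<^sub>R A) ^ 2"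
    using bj[unfolded bj_eps_orth_def, rule_format, of t] t by (simp add: mult_ac)
  also have "\<dots> = norm (T x) ^ 2 + 2 * t * inner (T x) (A x) + t ^ 2 * norm (A x) ^ 2"
    by (simp only: attain[symmetric] norm_add_scaleR_square)
  also have "\<dots> \<le> norm T ^ 2 + 2 * t * inner (T x) (A x) + t ^ 2 * norm A ^ 2"
    using Tx Ax t by (auto intro!: add_mono mult_left_mono power_mono)
  finally have "0 \<le> t * (2 * (eps * norm T * norm A) + 2 * inner (T x) (A x) + t * norm A ^ 2)"
    by (simp add: algebra_simps power2_eq_square)
  then have "- (eps * norm T * norm A) - inner (T x) (A x) \<le> t * norm A ^ 2 / 2"
    using t by (simp add: zero_le_mult_iff)
  then show ?thesis
    using x near by blast
qed

lemma bj_eps_orth_norm_attain_inner_ge: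
  fixes T A :: "'a::euclidean_space \<Rightarrow>\<^sub>L 'b::real_inner"
  assumes bj: "bj_eps_orth eps T A"
  shows "\<exists>x\<in>norm_attain T. - (eps * norm T * norm A) \<le> inner (T x) (A x)"
proof -
  have "\<exists>x\<in>sphere 0 1. norm T - norm (T x) \<le> 0 \<and> - (eps * norm T * norm A) - inner (T x) (A x) \<le> 0"
  proof (rule compact_exists_nonpos_if_approx)
    fix e :: real
    assume e: "0 < e"
    define K where "K = 2 * norm A + norm A ^ 2 + 1"
    have K: "0 < K" "2 * norm A \<le> K" "norm A ^ 2 / 2 \<le> K"
      by (simp_all add: K_def add_nonneg_pos)
    obtain x where "norm x = 1" "norm T - norm (T x) \<le> 2 * (e / K) * norm A"
      and "- (eps * norm T * norm A) - inner (T x) (A x) \<le> e / K * norm A ^ 2 / 2"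
      using bj_eps_orth_near_norm_attain[OF bj, of "e / K"] e K by auto
    moreover have "2 * (e / K) * norm A \<le> e" "e / K * norm A ^ 2 / 2 \<le> e"
      using e K by (simp_all add: field_simps)
    ultimately show "\<exists>x\<in>sphere 0 1. norm T - norm (T x) \<le> e \<and> - (eps * norm T * norm A) - inner (T x) (A x) \<le> e"
      by force
  qed (intro compact_sphere continuous_intros)+
  then obtain x where "norm x = 1" "norm T \<le> norm (T x)" "- (eps * norm T * norm A) \<le> inner (T x) (A x)"
    by auto
  moreover have "norm (T x) \<le> norm T"
    using norm_blinfun[of T x] \<open>norm x = 1\<close> by simp
  ultimately show ?thesis
    by (auto simp: norm_attain_def)
qed

lemma bj_eps_orth_if_norm_attain_inner_le:
  fixes T A :: "'a::real_normed_vector \<Rightarrow>\<^sub>L 'b::real_inner"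
  assumes x: "x \<in> norm_attain T" and q: "\<bar>inner (T x) (A x)\<bar> \<le> eps * norm T * norm A"
  shows "bj_eps_orth eps T A"
  unfolding bj_eps_orth_def
proof
  fix t :: real
  have "\<bar>t * inner (T x) (A x)\<bar> \<le> \<bar>t\<bar> * (eps * norm T * norm A)"
    using q by (simp add: abs_mult mult_left_mono)
  then have "norm T ^ 2 - 2 * eps * norm T * norm (t *\<^sub>R A) \<le> norm (T x) ^ 2 - 2 * \<bar>t * inner (T x) (A x)\<bar>"
    using x by (simp add: norm_attain_def mult_ac)
  also have "\<dots> \<le> norm (T x + t *\<^sub>R A x) ^ 2"
  proof -
    have "0 \<le> t^2 * norm (A x)^2"
      by simp
    then show ?thesis
      unfolding norm_add_scaleR_square
      using abs_ge_minus_self[of "t * inner (T x) (A x)"] by linarith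
  qed
  also have "\<dots> \<le> norm (T + t *\<^sub>R A) ^ 2"
    using norm_blinfun[of "T + t *\<^sub>R A" x] x
    by (simp add: norm_attain_def power_mono blinfun.add_left blinfun.scaleR_left)
  finally show "norm T ^ 2 - 2 * eps * norm T * norm (t *\<^sub>R A) \<le> norm (T + t *\<^sub>R A) ^ 2" .
qed

text \<open>Applying the lower bound to \<open>A\<close> and to \<open>-A\<close> gives points of \<open>M\<^sub>T\<close> where
  \<open>\<langle>T x, A x\<rangle> \<ge> -c\<close> and \<open>\<langle>T y, A y\<rangle> \<le> c\<close>; if neither lies in \<open>[-c, c]\<close>, the
  values have opposite signs.\<close>
lemma bj_eps_orth_iff_norm_attain_inner_le:
  fixes T A :: "'a::euclidean_space \<Rightarrow>\<^sub>L 'b::real_inner"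
  assumes eps: "0 \<le> eps"
  shows "bj_eps_orth eps T A \<longleftrightarrow> (\<exists>x\<in>norm_attain T. \<bar>inner (T x) (A x)\<bar> \<le> eps * norm T * norm A)"
proof
  assume bj: "bj_eps_orth eps T A"
  define c where "c = eps * norm T * norm A"
  obtain x where x: "x \<in> norm_attain T" and qx: "- c \<le> inner (T x) (A x)"
    using bj_eps_orth_norm_attain_inner_ge[OF bj] unfolding c_def by blast
  obtain y where y: "y \<in> norm_attain T" and qy: "inner (T y) (A y) \<le> c"
    using bj_eps_orth_norm_attain_inner_ge[OF bj_eps_orth_uminus[OF bj]]
    unfolding c_def by (auto simp: blinfun.minus_left)
  have "0 \<le> c"
    using eps by (simp add: c_def)
  then consider "\<bar>inner (T x) (A x)\<bar> \<le> c" | "\<bar>inner (T y) (A y)\<bar> \<le> c"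
    | "0 \<le> inner (T x) (A x)" "inner (T y) (A y) \<le> 0"
    using qx qy by linarith
  then show "\<exists>x\<in>norm_attain T. \<bar>inner (T x) (A x)\<bar> \<le> c"
    using x y norm_attain_inner_zero[OF x y, of A] \<open>0 \<le> c\<close> by cases force+
qed (auto intro: bj_eps_orth_if_norm_attain_inner_le)

theorem mainTheorem4:
  fixes T :: "'a::euclidean_space \<Rightarrow>\<^sub>L 'a" and eps :: real
  assumes "0 \<le> eps" and "eps < 1"
  shows "(\<forall>A :: 'a \<Rightarrow>\<^sub>L 'a. bj_eps_orth eps T A \<longleftrightarrow>
            (\<exists>x\<in>norm_attain T. \<bar>inner (blinfun_apply T x) (blinfun_apply A x)\<bar> \<le> eps * norm T * norm A))
       \<and> (\<forall>A :: 'a \<Rightarrow>\<^sub>L 'a. norm_attain T \<subseteq> norm_attain A \<longrightarrow>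
            (bj_eps_orth eps T A \<longleftrightarrow>
             (\<exists>x\<in>norm_attain T. inner_eps_orth eps (blinfun_apply T x) (blinfun_apply A x))))"
proof (intro conjI allI impI)
  fix A :: "'a \<Rightarrow>\<^sub>L 'a"
  show "bj_eps_orth eps T A \<longleftrightarrow>
          (\<exists>x\<in>norm_attain T. \<bar>inner (T x) (A x)\<bar> \<le> eps * norm T * norm A)"
    using bj_eps_orth_iff_norm_attain_inner_le[OF assms(1)] .
next
  fix A :: "'a \<Rightarrow>\<^sub>L 'a"
  assume "norm_attain T \<subseteq> norm_attain A"
  then have "inner_eps_orth eps (T x) (A x) \<longleftrightarrow> \<bar>inner (T x) (A x)\<bar> \<le> eps * norm T * norm A"
    if "x \<in> norm_attain T" for x
    using that by (auto simp: norm_attain_def inner_eps_orth_def)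
  then show "bj_eps_orth eps T A \<longleftrightarrow> (\<exists>x\<in>norm_attain T. inner_eps_orth eps (T x) (A x))"
    using bj_eps_orth_iff_norm_attain_inner_le[OF assms(1), of T A] by auto
qed

end
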